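(* For every integer $a \ge 3$, every $b \in \mathbb{N}$ and every cycle graph $C_a$ of order $a$, $R_\mathrm{ord}(C_a, P_b^\mathrm{mon}) = 1 + (a-1)(b-1)$.
   Context: All graphs are finite, simple and undirected, and a graph of order $n$ has vertex set $\{0,1,\ldots,n-1\}$; $K_n$ is the complete graph on $\{0,\ldots,n-1\}$. A cycle graph of order $a$ is any graph on $\{0,\ldots,a-1\}$ whose edges form a single Hamiltonian cycle (in any vertex order). A $2$-edge-coloring of $K_n$ assigns each edge a color in $\{1,2\}$. An increasing embedding of $H$ in color $j$ is an injective map $\varphi\colon V(H)\to V(K_n)$ with $\varphi(0)<\cdots<\varphi(|H|-1)$ such that every edge $uv$ of $H$ goes to an edge $\{\varphi(u),\varphi(v)\}$ of color $j$. $R_\mathrm{ord}(H_1,H_2)$ is the smallest $n$ such that every $2$-edge-coloring of $K_n$ admits an increasing embedding of $H_1$ in color $1$ or of $H_2$ in color $2$. The monotone path $P_n^\mathrm{mon}$ has edges $\{i,i+1\}$, $0\le i\le n-2$. *)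

theory Defs
  imports Main
begin

text \<open>A graph of order m is represented by its order m (vertex set {0..<m}) together with
  its edge set, a set of 2-element subsets of {0..<m}.\<close>

definition cycle_graph :: "nat \<Rightarrow> nat set set \<Rightarrow> bool" where
  "cycle_graph a E \<longleftrightarrow>
     (\<exists>\<sigma>. bij_betw \<sigma> {..<a} {..<a} \<and> E = {{\<sigma> i, \<sigma> (Suc i mod a)} | i. i < a})"

definition mon_path_edges :: "nat \<Rightarrow> nat set set" where
  "mon_path_edges n = {{i, Suc i} | i. Suc i < n}"

definition two_coloring :: "nat \<Rightarrow> (nat set \<Rightarrow> nat) \<Rightarrow> bool" where
  "two_coloring n c \<longleftrightarrow> (\<forall>x y. x < n \<longrightarrow> y < n \<longrightarrow> x \<noteq> y \<longrightarrow> c {x, y} \<in> {1, 2})"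

definition incr_embedding ::
    "nat \<Rightarrow> (nat set \<Rightarrow> nat) \<Rightarrow> nat \<Rightarrow> nat \<Rightarrow> nat set set \<Rightarrow> bool" where
  "incr_embedding n c j m E \<longleftrightarrow>
     (\<exists>\<phi>. strict_mono_on {..<m} \<phi> \<and> (\<forall>i<m. \<phi> i < n) \<and>
          (\<forall>u v. {u, v} \<in> E \<longrightarrow> c {\<phi> u, \<phi> v} = j))"

definition ord_arrows :: "nat \<Rightarrow> nat \<Rightarrow> nat set set \<Rightarrow> nat \<Rightarrow> nat set set \<Rightarrow> bool" where
  "ord_arrows n m1 E1 m2 E2 \<longleftrightarrow>
     (\<forall>c. two_coloring n c \<longrightarrow> incr_embedding n c 1 m1 E1 \<or> incr_embedding n c 2 m2 E2)"

definition R_ord :: "nat \<Rightarrow> nat set set \<Rightarrow> nat \<Rightarrow> nat set set \<Rightarrow> nat" where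
  "R_ord m1 E1 m2 E2 = (LEAST n. ord_arrows n m1 E1 m2 E2)"

end

theory Submission
  imports Defs
begin

(* Lower bound: cut {0..<(a-1)(b-1)} into b-1 consecutive blocks of a-1 vertices and colour an
   edge 1 iff it lies inside a block. A colour-1 copy of the connected graph C_a would have to lie
   in a single block, and a colour-2 monotone path meets each block at most once.
   Upper bound: label each vertex v by the number of vertices of the longest colour-2 monotone
   path ending at v. Without a colour-2 P_b these labels lie in {1..<b}, and a colour-2 edge u < v
   strictly increases the label, so by pigeonhole some label class has a vertices, all joined in
   colour 1; any graph of order a embeds increasingly into such a clique. *)

lemma cycle_graph_hamiltonian_path:
  assumes "cycle_graph a E"
  obtains \<sigma> where "bij_betw \<sigma> {..<a} {..<a}"
    and "\<And>i. Suc i < a \<Longrightarrow> {\<sigma> i, \<sigma> (Suc i)} \<in> E"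
proof -
  obtain \<sigma> where "bij_betw \<sigma> {..<a} {..<a}"
    and E: "E = {{\<sigma> i, \<sigma> (Suc i mod a)} | i. i < a}"
    using assms by (auto simp: cycle_graph_def)
  moreover have "{\<sigma> i, \<sigma> (Suc i)} \<in> E" if "Suc i < a" for i
    unfolding E using that by (intro CollectI exI[of _ i]) simp
  ultimately show thesis
    using that by blast
qed

lemma cycle_graph_edgeD:
  assumes "cycle_graph a E" and "2 \<le> a" and "{u, v} \<in> E"
  shows "u < a \<and> v < a \<and> u \<noteq> v"
proof -
  obtain \<sigma> i where \<sigma>: "bij_betw \<sigma> {..<a} {..<a}" and i: "i < a"
    and uv: "{u, v} = {\<sigma> i, \<sigma> (Suc i mod a)}"
    using assms(1,3) by (auto simp: cycle_graph_def)
  have "Suc i mod a < a" and "i \<noteq> Suc i mod a"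
    using i assms(2) by (auto simp: mod_Suc)
  then have "\<sigma> i \<noteq> \<sigma> (Suc i mod a)" and "\<sigma> i < a" and "\<sigma> (Suc i mod a) < a"
    using \<sigma> i by (auto simp: bij_betw_def inj_on_def)
  then show ?thesis
    using uv by (auto simp: doubleton_eq_iff)
qed

definition block_coloring :: "nat \<Rightarrow> nat set \<Rightarrow> nat" where
  "block_coloring d e = (if card ((\<lambda>x. x div d) ` e) = 1 then 1 else 2)"

lemma block_coloring_pair [simp]:
  "block_coloring d {x, y} = (if x div d = y div d then 1 else 2)"
  by (auto simp: block_coloring_def card_insert_if)

lemma two_coloring_block_coloring: "two_coloring n (block_coloring d)"
  by (simp add: two_coloring_def)

lemma card_div_eq:
  assumes "0 < (d::nat)"
  shows "card {x. x div d = k} = d"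
proof -
  have "{x. x div d = k} = {k * d..<k * d + d}"
    using assms by (auto simp: div_nat_eqI mult.commute add.commute dividend_less_times_div)
  then show ?thesis
    by simp
qed

lemma block_coloring_traceable_bound:
  assumes "0 < d" and \<sigma>: "bij_betw \<sigma> {..<a} {..<a}"
    and path: "\<And>i. Suc i < a \<Longrightarrow> {\<sigma> i, \<sigma> (Suc i)} \<in> E"
    and "incr_embedding n (block_coloring d) 1 a E"
  shows "a \<le> d"
proof -
  obtain \<phi> where mono: "strict_mono_on {..<a} \<phi>"
    and col: "\<And>u v. {u, v} \<in> E \<Longrightarrow> block_coloring d {\<phi> u, \<phi> v} = 1"
    using assms(4) by (auto simp: incr_embedding_def)
  define k where "k = \<phi> (\<sigma> 0) div d"
  have same_block: "\<phi> (\<sigma> i) div d = k" if "i < a" for i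
    using that
  proof (induction i)
    case (Suc i)
    then show ?case
      using col[OF path[OF Suc.prems]] by (simp split: if_splits)
  qed (simp add: k_def)
  have "\<phi> ` {..<a} = \<phi> ` \<sigma> ` {..<a}"
    using \<sigma> by (simp add: bij_betw_def)
  also have "\<dots> \<subseteq> {x. x div d = k}"
    using same_block by auto
  finally have "card (\<phi> ` {..<a}) \<le> d"
    using card_mono card_div_eq[OF \<open>0 < d\<close>, of k]
    by (metis card.infinite less_irrefl \<open>0 < d\<close>)
  then show ?thesis
    using strict_mono_on_imp_inj_on[OF mono] by (simp add: card_image)
qed

lemma block_coloring_path_bound:
  assumes "incr_embedding n (block_coloring d) 2 b (mon_path_edges b)" and "1 \<le> b"
  shows "(b - 1) * d < n"
proof -
  obtain \<phi> where mono: "strict_mono_on {..<b} \<phi>" and bounded: "\<And>i. i < b \<Longrightarrow> \<phi> i < n"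
    and col: "\<And>u v. {u, v} \<in> mon_path_edges b \<Longrightarrow> block_coloring d {\<phi> u, \<phi> v} = 2"
    using assms(1) by (auto simp: incr_embedding_def)
  have block_step: "\<phi> i div d < \<phi> (Suc i) div d" if "Suc i < b" for i
  proof -
    have "{i, Suc i} \<in> mon_path_edges b"
      using that by (auto simp: mon_path_edges_def)
    then have "\<phi> i div d \<noteq> \<phi> (Suc i) div d"
      using col[of i "Suc i"] by (auto split: if_splits)
    moreover have "\<phi> i \<le> \<phi> (Suc i)"
      using strict_mono_onD[OF mono, of i "Suc i"] that by simp
    ultimately show ?thesis
      using div_le_mono le_neq_implies_less by blast
  qed
  have block_index: "i \<le> \<phi> i div d" if "i < b" for i
    using that by (induction i) (auto dest: block_step)
  have "(b - 1) * d \<le> \<phi> (b - 1) div d * d"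
    using block_index[of "b - 1"] assms(2) by simp
  also have "\<dots> \<le> \<phi> (b - 1)"
    by simp
  also have "\<dots> < n"
    using bounded assms(2) by simp
  finally show ?thesis .
qed

lemma not_ord_arrows_cycle_path:
  assumes "2 \<le> a" and "1 \<le> b" and "cycle_graph a E" and "n \<le> (a - 1) * (b - 1)"
  shows "\<not> ord_arrows n a E b (mon_path_edges b)"
proof
  assume "ord_arrows n a E b (mon_path_edges b)"
  then have "incr_embedding n (block_coloring (a - 1)) 1 a E \<or>
      incr_embedding n (block_coloring (a - 1)) 2 b (mon_path_edges b)"
    using two_coloring_block_coloring by (simp add: ord_arrows_def)
  moreover obtain \<sigma> where "bij_betw \<sigma> {..<a} {..<a}" "\<And>i. Suc i < a \<Longrightarrow> {\<sigma> i, \<sigma> (Suc i)} \<in> E"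
    using cycle_graph_hamiltonian_path[OF assms(3)] by blast
  ultimately show False
    using block_coloring_traceable_bound[of "a - 1" \<sigma> a E n]
      block_coloring_path_bound[of n "a - 1" b] assms by (auto simp: mult.commute)
qed

definition colored_path_to :: "(nat set \<Rightarrow> nat) \<Rightarrow> nat \<Rightarrow> nat \<Rightarrow> nat \<Rightarrow> bool" where
  "colored_path_to c j k v \<longleftrightarrow> 0 < k \<and>
     (\<exists>\<psi>. strict_mono_on {..<k} \<psi> \<and> \<psi> (k - 1) = v \<and>
          (\<forall>i. Suc i < k \<longrightarrow> c {\<psi> i, \<psi> (Suc i)} = j))"

lemma colored_path_to_one: "colored_path_to c j 1 v"
  by (auto simp: colored_path_to_def monotone_on_def intro!: exI[of _ "\<lambda>_. v"])

lemma strict_mono_on_lessThan_le_last: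
  fixes \<psi> :: "nat \<Rightarrow> 'a::order"
  assumes "strict_mono_on {..<k} \<psi>" and "i < k"
  shows "\<psi> i \<le> \<psi> (k - 1)"
proof (cases "i = k - 1")
  case False
  then have "i < k - 1"
    using assms(2) by linarith
  then show ?thesis
    using strict_mono_onD[OF assms(1), of i "k - 1"] assms(2) by simp
qed simp

lemma colored_path_to_extend:
  assumes "colored_path_to c j k u" and "u < v" and "c {u, v} = j"
  shows "colored_path_to c j (Suc k) v"
proof -
  obtain \<psi> where k: "0 < k" and mono: "strict_mono_on {..<k} \<psi>" and last: "\<psi> (k - 1) = u"
    and col: "\<And>i. Suc i < k \<Longrightarrow> c {\<psi> i, \<psi> (Suc i)} = j"
    using assms(1) by (auto simp: colored_path_to_def)
  have "strict_mono_on {..<Suc k} (\<psi>(k := v))"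
  proof (rule strict_mono_onI)
    fix r s :: nat
    assume "r \<in> {..<Suc k}" "s \<in> {..<Suc k}" "r < s"
    then show "(\<psi>(k := v)) r < (\<psi>(k := v)) s"
      using strict_mono_onD[OF mono, of r s] strict_mono_on_lessThan_le_last[OF mono, of r]
        last assms(2) by (cases "s = k") auto
  qed
  moreover have "c {(\<psi>(k := v)) i, (\<psi>(k := v)) (Suc i)} = j" if "Suc i < Suc k" for i
    using that col[of i] last assms(3) by (cases "Suc i = k") auto
  ultimately show ?thesis
    unfolding colored_path_to_def by (intro conjI exI[of _ "\<psi>(k := v)"] allI impI) simp_all
qed

lemma colored_path_to_imp_incr_embedding:
  assumes "colored_path_to c j k v" and "v < n" and "b \<le> k"
  shows "incr_embedding n c j b (mon_path_edges b)"
proof -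
  obtain \<psi> where mono: "strict_mono_on {..<k} \<psi>" and last: "\<psi> (k - 1) = v"
    and col: "\<And>i. Suc i < k \<Longrightarrow> c {\<psi> i, \<psi> (Suc i)} = j"
    using assms(1) by (auto simp: colored_path_to_def)
  have "strict_mono_on {..<b} \<psi>"
    using mono assms(3) by (auto simp: monotone_on_def)
  moreover have "\<psi> i < n" if "i < b" for i
    using strict_mono_on_lessThan_le_last[OF mono, of i] that last assms by simp
  moreover have "c {\<psi> u, \<psi> w} = j" if "{u, w} \<in> mon_path_edges b" for u w
  proof -
    have "\<exists>i. {u, w} = {i, Suc i} \<and> Suc i < b"
      using that by (simp add: mon_path_edges_def)
    then obtain i where "{u, w} = {i, Suc i}" and "Suc i < b"
      by blast
    then have "{\<psi> u, \<psi> w} = {\<psi> i, \<psi> (Suc i)}" and "Suc i < k"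
      using assms(3) by (auto simp: doubleton_eq_iff)
    then show ?thesis
      using col[of i] by simp
  qed
  ultimately show ?thesis
    unfolding incr_embedding_def by blast
qed

lemma path_length_labelling:
  assumes "\<not> incr_embedding n c j b (mon_path_edges b)"
  obtains L where "\<And>v. v < n \<Longrightarrow> L v \<in> {1..<b}"
    and "\<And>u v. u < v \<Longrightarrow> v < n \<Longrightarrow> c {u, v} = j \<Longrightarrow> L u < L v"
proof
  have short: "k < b" if "colored_path_to c j k v" "v < n" for k v
    using colored_path_to_imp_incr_embedding[OF that] assms by (meson not_less)
  define L where "L v = Max {k. colored_path_to c j k v}" for v
  have fin: "finite {k. colored_path_to c j k v}" if "v < n" for v
    by (rule finite_subset[of _ "{..<b}"]) (auto dest: short[OF _ that])
  have L_ge: "k \<le> L v" if "colored_path_to c j k v" "v < n" for k v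
    unfolding L_def using fin[OF that(2)] that(1) by (simp add: Max_ge)
  have L_path: "colored_path_to c j (L v) v" if "v < n" for v
    unfolding L_def using Max_in[OF fin[OF that]] colored_path_to_one by blast
  show "L v \<in> {1..<b}" if "v < n" for v
    using L_ge[OF colored_path_to_one that] short[OF L_path that] that by simp
  show "L u < L v" if "u < v" "v < n" "c {u, v} = j" for u v
    using L_ge[OF colored_path_to_extend[OF L_path that(1,3)] that(2)] that by simp
qed

lemma pigeonhole_fibre:
  assumes "f ` A \<subseteq> B" and "finite B" and "card B * m < card A"
  shows "\<exists>y\<in>B. m < card {x\<in>A. f x = y}"
proof (rule ccontr)
  assume "\<not> ?thesis"
  then have small: "card {x\<in>A. f x = y} \<le> m" if "y \<in> B" for y
    using that by (simp add: not_less)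
  have "card A = card (\<Union>y\<in>B. {x\<in>A. f x = y})"
    using assms(1) by (intro arg_cong[where f = card]) auto
  also have "\<dots> \<le> (\<Sum>y\<in>B. card {x\<in>A. f x = y})"
    by (rule card_UN_le[OF assms(2)])
  also have "\<dots> \<le> card B * m"
    using sum_mono[OF small] by simp
  finally show False
    using assms(3) by simp
qed

lemma monochromatic_set_if_no_colored_path:
  assumes "two_coloring n c" and "\<not> incr_embedding n c 2 b (mon_path_edges b)"
    and "(a - 1) * (b - 1) < n"
  obtains S where "S \<subseteq> {..<n}" and "a \<le> card S"
    and "\<And>u v. u \<in> S \<Longrightarrow> v \<in> S \<Longrightarrow> u < v \<Longrightarrow> c {u, v} = 1"
proof -
  obtain L where L_range: "\<And>v. v < n \<Longrightarrow> L v \<in> {1..<b}"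
    and L_mono: "\<And>u v. u < v \<Longrightarrow> v < n \<Longrightarrow> c {u, v} = 2 \<Longrightarrow> L u < L v"
    using path_length_labelling[OF assms(2)] by blast
  have range: "L ` {..<n} \<subseteq> {1..<b}"
    using L_range by auto
  have count: "card {1..<b} * (a - 1) < card {..<n}"
    using assms(3) by (simp add: mult.commute)
  obtain t where large: "a - 1 < card {v\<in>{..<n}. L v = t}"
    using pigeonhole_fibre[OF range finite_atLeastLessThan count] by blast
  show thesis
  proof (rule that)
    show "{v\<in>{..<n}. L v = t} \<subseteq> {..<n}"
      by blast
    show "a \<le> card {v\<in>{..<n}. L v = t}"
      using large by linarith
  next
    fix u v
    assume "u \<in> {v\<in>{..<n}. L v = t}" "v \<in> {v\<in>{..<n}. L v = t}" "u < v"
    moreover from this have "c {u, v} \<in> {1, 2}"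
      using assms(1) unfolding two_coloring_def by simp
    ultimately show "c {u, v} = 1"
      using L_mono[of u v] by auto
  qed
qed

lemma incr_embedding_into_clique:
  assumes "S \<subseteq> {..<n}" and "a \<le> card S"
    and clique: "\<And>u v. u \<in> S \<Longrightarrow> v \<in> S \<Longrightarrow> u < v \<Longrightarrow> c {u, v} = j"
    and E: "\<And>u v. {u, v} \<in> E \<Longrightarrow> u < a \<and> v < a \<and> u \<noteq> v"
  shows "incr_embedding n c j a E"
proof -
  define xs where "xs = sorted_list_of_set S"
  have "finite S"
    using assms(1) finite_subset by blast
  then have len: "length xs = card S" and set: "set xs = S" and sorted: "sorted_wrt (<) xs"
    by (simp_all add: xs_def)
  have in_S: "xs ! i \<in> S" if "i < a" for i
    using that assms(2) len set nth_mem by (metis less_le_trans)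
  have less: "xs ! u < xs ! v" if "u < v" "v < a" for u v
    using sorted_wrt_nth_less[OF sorted that(1)] that assms(2) len by simp
  have "strict_mono_on {..<a} (\<lambda>i. xs ! i)"
    by (auto intro!: strict_mono_onI less)
  moreover have "xs ! i < n" if "i < a" for i
    using in_S[OF that] assms(1) by auto
  moreover have "c {xs ! u, xs ! v} = j" if "{u, v} \<in> E" for u v
  proof -
    have "u < a" "v < a" "u \<noteq> v"
      using E[OF that] by auto
    show ?thesis
    proof (cases "u < v")
      case True
      then show ?thesis
        using clique in_S less \<open>u < a\<close> \<open>v < a\<close> by simp
    next
      case False
      then have "v < u"
        using \<open>u \<noteq> v\<close> by simp
      then show ?thesis
        using clique[of "xs ! v" "xs ! u"] in_S less \<open>u < a\<close> \<open>v < a\<close> by (simp add: insert_commute)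
    qed
  qed
  ultimately show ?thesis
    unfolding incr_embedding_def by (intro exI[of _ "\<lambda>i. xs ! i"]) simp
qed

lemma ord_arrows_graph_path:
  assumes E: "\<And>u v. {u, v} \<in> E \<Longrightarrow> u < a \<and> v < a \<and> u \<noteq> v"
    and "(a - 1) * (b - 1) < n"
  shows "ord_arrows n a E b (mon_path_edges b)"
  unfolding ord_arrows_def
proof (intro allI impI disjCI)
  fix c
  assume "two_coloring n c" and "\<not> incr_embedding n c 2 b (mon_path_edges b)"
  from monochromatic_set_if_no_colored_path[OF this assms(2)]
  obtain S where "S \<subseteq> {..<n}" "a \<le> card S"
    and "\<And>u v. u \<in> S \<Longrightarrow> v \<in> S \<Longrightarrow> u < v \<Longrightarrow> c {u, v} = 1"
    by blast
  then show "incr_embedding n c 1 a E"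
    using E by (rule incr_embedding_into_clique)
qed

theorem corollary4p3:
  fixes a b :: nat and E :: "nat set set"
  assumes "a \<ge> 3" and "b \<ge> 1" and "cycle_graph a E"
  shows "R_ord a E b (mon_path_edges b) = 1 + (a - 1) * (b - 1)"
  unfolding R_ord_def
proof (rule Least_equality)
  have edges: "\<And>u v. {u, v} \<in> E \<Longrightarrow> u < a \<and> v < a \<and> u \<noteq> v"
    using cycle_graph_edgeD assms by simp
  show "ord_arrows (1 + (a - 1) * (b - 1)) a E b (mon_path_edges b)"
    using ord_arrows_graph_path[OF edges] by simp
next
  fix n
  assume "ord_arrows n a E b (mon_path_edges b)"
  then show "1 + (a - 1) * (b - 1) \<le> n"
    using not_ord_arrows_cycle_path[of a b E n] assms by linarith
qed

end
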